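(* Let $G$ be an interval graph (possibly colored) with at least one vertex. Then the underlying uncolored graph of $G_{\mathcal{M}}$ is a unit square graph.
   Context: An interval graph is an intersection graph of intervals on the real line. $\mathcal{M}(G)$ is the set of maximal cliques of $G$. $G_{\mathcal{M}}$ is the colored graph with vertex set $V(G)\sqcup\mathcal{M}(G)$, edge set $\{vC \mid C\in\mathcal{M}(G), v\in C\}\cup\{vw\mid v\ne w\in V(G)\}\cup\{CD\mid C\neq D\in\mathcal{M}(G)\}$, and coloring $c(v)=c_G(v)+1$ for $v\in V(G)$, $c(C)=1$ for $C\in\mathcal{M}(G)$. A unit square graph is a graph $H$ admitting $f\colon V(H)\to\mathbb{R}^2$ with $vw\in E(H)$ iff $\|f(v)-f(w)\|_\infty\le1$ for distinct $v,w$. *)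

theory Defs
  imports Complex_Main
begin

definition simple_graph :: "'a set \<Rightarrow> ('a \<Rightarrow> 'a \<Rightarrow> bool) \<Rightarrow> bool" where
  "simple_graph V E \<longleftrightarrow> finite V \<and> (\<forall>v w. E v w \<longrightarrow> v \<in> V \<and> w \<in> V)
     \<and> (\<forall>v w. E v w \<longrightarrow> E w v) \<and> (\<forall>v. \<not> E v v)"

definition interval_graph :: "'a set \<Rightarrow> ('a \<Rightarrow> 'a \<Rightarrow> bool) \<Rightarrow> bool" where
  "interval_graph V E \<longleftrightarrow> simple_graph V E \<and>
     (\<exists>l r :: 'a \<Rightarrow> real. (\<forall>v\<in>V. l v \<le> r v) \<and>
        (\<forall>v\<in>V. \<forall>w\<in>V. v \<noteq> w \<longrightarrow>
            (E v w \<longleftrightarrow> {l v..r v} \<inter> {l w..r w} \<noteq> {})))"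

definition is_clique :: "'a set \<Rightarrow> ('a \<Rightarrow> 'a \<Rightarrow> bool) \<Rightarrow> 'a set \<Rightarrow> bool" where
  "is_clique V E C \<longleftrightarrow> C \<subseteq> V \<and> (\<forall>v\<in>C. \<forall>w\<in>C. v \<noteq> w \<longrightarrow> E v w)"

definition maximal_cliques :: "'a set \<Rightarrow> ('a \<Rightarrow> 'a \<Rightarrow> bool) \<Rightarrow> 'a set set" where
  "maximal_cliques V E = {C. is_clique V E C \<and> (\<forall>D. is_clique V E D \<and> C \<subseteq> D \<longrightarrow> D = C)}"

definition GM_vertices :: "'a set \<Rightarrow> ('a \<Rightarrow> 'a \<Rightarrow> bool) \<Rightarrow> ('a + 'a set) set" where
  "GM_vertices V E = Inl ` V \<union> Inr ` maximal_cliques V E"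

definition GM_edges :: "'a set \<Rightarrow> ('a \<Rightarrow> 'a \<Rightarrow> bool) \<Rightarrow> ('a + 'a set) \<Rightarrow> ('a + 'a set) \<Rightarrow> bool" where
  "GM_edges V E x y \<longleftrightarrow> x \<in> GM_vertices V E \<and> y \<in> GM_vertices V E \<and>
     (case (x, y) of
        (Inl v, Inl w) \<Rightarrow> v \<noteq> w
      | (Inr C, Inr D) \<Rightarrow> C \<noteq> D
      | (Inl v, Inr C) \<Rightarrow> v \<in> C
      | (Inr C, Inl v) \<Rightarrow> v \<in> C)"

text \<open>Colouring of G_M: c(v) = c_G(v)+1, c(C) = 1 (irrelevant for the underlying graph).\<close>
definition GM_colour :: "('a \<Rightarrow> nat) \<Rightarrow> ('a + 'a set) \<Rightarrow> nat" where
  "GM_colour cG x = (case x of Inl v \<Rightarrow> cG v + 1 | Inr C \<Rightarrow> 1)"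

definition unit_square_graph :: "'b set \<Rightarrow> ('b \<Rightarrow> 'b \<Rightarrow> bool) \<Rightarrow> bool" where
  "unit_square_graph V E \<longleftrightarrow> (\<exists>f :: 'b \<Rightarrow> real \<times> real.
     \<forall>v\<in>V. \<forall>w\<in>V. v \<noteq> w \<longrightarrow>
       (E v w \<longleftrightarrow> max \<bar>fst (f v) - fst (f w)\<bar> \<bar>snd (f v) - snd (f w)\<bar> \<le> 1))"

end

theory Submission
  imports Defs
begin

text \<open>Fix an interval model v \<mapsto> [l v, r v] of G. Pairwise intersecting intervals share a
  point, so every maximal clique is exactly the set of intervals containing some point p.
  Squash the real line monotonically into (-1/2, 1/2) by s, put the vertex v at
  (1 + s (l v), 1 - s (r v)) and a clique stabbed at p at (s p, - s p). Then any two
  vertices, and any two cliques, are at sup-distance < 1, while a vertex and a clique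
  are at sup-distance \<le> 1 iff s (l v) \<le> s p \<le> s (r v), i.e. iff p \<in> [l v, r v].\<close>

definition interval_model :: "'a set \<Rightarrow> ('a \<Rightarrow> 'a \<Rightarrow> bool) \<Rightarrow> ('a \<Rightarrow> real) \<Rightarrow> ('a \<Rightarrow> real) \<Rightarrow> bool"
  where "interval_model V E l r \<longleftrightarrow> (\<forall>v\<in>V. l v \<le> r v) \<and>
     (\<forall>v\<in>V. \<forall>w\<in>V. v \<noteq> w \<longrightarrow> (E v w \<longleftrightarrow> {l v..r v} \<inter> {l w..r w} \<noteq> {}))"

definition intervals_containing :: "'a set \<Rightarrow> ('a \<Rightarrow> real) \<Rightarrow> ('a \<Rightarrow> real) \<Rightarrow> real \<Rightarrow> 'a set"
  where "intervals_containing V l r p = {v\<in>V. l v \<le> p \<and> p \<le> r v}"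

lemma interval_graph_iff_model:
  "interval_graph V E \<longleftrightarrow> simple_graph V E \<and> (\<exists>l r. interval_model V E l r)"
  unfolding interval_graph_def interval_model_def by blast

lemma interval_model_clique_overlap:
  assumes "interval_model V E l r" "is_clique V E C" "u \<in> C" "w \<in> C"
  shows "l w \<le> r u"
proof (cases "u = w")
  case True
  then show ?thesis using assms unfolding interval_model_def is_clique_def by blast
next
  case False
  then have "{l u..r u} \<inter> {l w..r w} \<noteq> {}"
    using assms unfolding interval_model_def is_clique_def by blast
  then show ?thesis by auto
qed

lemma interval_model_clique_has_common_point:
  assumes "interval_model V E l r" "is_clique V E C" "finite C"
  obtains p where "C \<subseteq> intervals_containing V l r p"
proof (cases "C = {}")
  case True
  then show ?thesis using that by blast
next
  case False
  let ?p = "Max (l ` C)"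
  have "l w \<le> ?p" "?p \<le> r w" if "w \<in> C" for w
  proof -
    show "l w \<le> ?p" using that \<open>finite C\<close> by simp
    have "?p \<in> l ` C" using \<open>finite C\<close> \<open>C \<noteq> {}\<close> by simp
    then obtain u where "u \<in> C" "l u = ?p" by auto
    then show "?p \<le> r w" using interval_model_clique_overlap[OF assms(1,2) that] by metis
  qed
  moreover have "C \<subseteq> V" using assms(2) unfolding is_clique_def by blast
  ultimately show ?thesis using that[of ?p] unfolding intervals_containing_def by blast
qed

lemma interval_model_intervals_containing_clique:
  assumes "interval_model V E l r"
  shows "is_clique V E (intervals_containing V l r p)"
  unfolding is_clique_def
proof (intro conjI ballI impI)
  fix v w assume "v \<in> intervals_containing V l r p" "w \<in> intervals_containing V l r p" "v \<noteq> w"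
  moreover from this have "p \<in> {l v..r v} \<inter> {l w..r w}"
    unfolding intervals_containing_def by simp
  ultimately show "E v w"
    using assms unfolding interval_model_def intervals_containing_def by blast
qed (auto simp: intervals_containing_def)

lemma interval_model_maximal_clique_stabbed:
  assumes "interval_model V E l r" "finite V" "C \<in> maximal_cliques V E"
  obtains p where "C = intervals_containing V l r p"
proof -
  have C: "is_clique V E C" and maximal: "\<And>D. is_clique V E D \<Longrightarrow> C \<subseteq> D \<Longrightarrow> D = C"
    using assms(3) unfolding maximal_cliques_def by blast+
  have "finite C" using C \<open>finite V\<close> finite_subset unfolding is_clique_def by blast
  then obtain p where "C \<subseteq> intervals_containing V l r p"
    using interval_model_clique_has_common_point[OF assms(1) C] by blast
  then show ?thesis
    using maximal[OF interval_model_intervals_containing_clique[OF assms(1)]] that by metis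
qed

definition sup_dist :: "real \<times> real \<Rightarrow> real \<times> real \<Rightarrow> real"
  where "sup_dist x y = max \<bar>fst x - fst y\<bar> \<bar>snd x - snd y\<bar>"

lemma sup_dist_commute: "sup_dist x y = sup_dist y x"
  unfolding sup_dist_def by (simp add: abs_minus_commute)

lemma unit_square_graph_iff_sup_dist:
  "unit_square_graph V E \<longleftrightarrow>
     (\<exists>f. \<forall>v\<in>V. \<forall>w\<in>V. v \<noteq> w \<longrightarrow> (E v w \<longleftrightarrow> sup_dist (f v) (f w) \<le> 1))"
  unfolding unit_square_graph_def sup_dist_def ..

definition squash :: "real \<Rightarrow> real"
  where "squash x = arctan x / 4"

lemma abs_squash_less: "\<bar>squash x\<bar> < 1/2"
  using arctan_bounded[of x] pi_less_4 unfolding squash_def by auto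

lemma squash_le_iff: "squash x \<le> squash y \<longleftrightarrow> x \<le> y"
  unfolding squash_def using arctan_le_iff[of x y] by simp

definition interval_point :: "real \<Rightarrow> real \<Rightarrow> real \<times> real"
  where "interval_point a b = (1 + squash a, 1 - squash b)"

definition stab_point :: "real \<Rightarrow> real \<times> real"
  where "stab_point p = (squash p, - squash p)"

lemma sup_dist_interval_points: "sup_dist (interval_point a b) (interval_point c d) \<le> 1"
  using abs_squash_less[of a] abs_squash_less[of b] abs_squash_less[of c] abs_squash_less[of d]
  unfolding sup_dist_def interval_point_def abs_less_iff
  by (simp only: fst_conv snd_conv max.bounded_iff abs_le_iff) linarith

lemma sup_dist_stab_points: "sup_dist (stab_point p) (stab_point q) \<le> 1"
  using abs_squash_less[of p] abs_squash_less[of q]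
  unfolding sup_dist_def stab_point_def abs_less_iff
  by (simp only: fst_conv snd_conv max.bounded_iff abs_le_iff) linarith

lemma sup_dist_interval_stab_point_le_1_iff:
  "sup_dist (interval_point a b) (stab_point p) \<le> 1 \<longleftrightarrow> a \<le> p \<and> p \<le> b"
proof -
  have "\<bar>1 + squash a - squash p\<bar> = 1 + squash a - squash p"
    and "\<bar>1 - squash b - - squash p\<bar> = 1 - squash b + squash p"
    using abs_squash_less[of a] abs_squash_less[of b] abs_squash_less[of p] by auto
  then have "sup_dist (interval_point a b) (stab_point p)
      = max (1 + squash a - squash p) (1 - squash b + squash p)"
    unfolding sup_dist_def interval_point_def stab_point_def by simp
  then have "sup_dist (interval_point a b) (stab_point p) \<le> 1
      \<longleftrightarrow> squash a \<le> squash p \<and> squash p \<le> squash b"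
    by simp
  then show ?thesis unfolding squash_le_iff .
qed

lemma unit_square_graph_GM_if_cliques_stabbed:
  assumes "\<And>C. C \<in> maximal_cliques V E \<Longrightarrow> C = intervals_containing V l r (P C)"
  shows "unit_square_graph (GM_vertices V E) (GM_edges V E)"
  unfolding unit_square_graph_iff_sup_dist
proof (intro exI ballI impI)
  let ?f = "case_sum (\<lambda>v. interval_point (l v) (r v)) (\<lambda>C. stab_point (P C))"
  have vertex_clique: "GM_edges V E (Inl v) (Inr C) \<longleftrightarrow> sup_dist (?f (Inl v)) (?f (Inr C)) \<le> 1"
    if "v \<in> V" "C \<in> maximal_cliques V E" for v C
  proof -
    have "GM_edges V E (Inl v) (Inr C) \<longleftrightarrow> v \<in> C"
      using that by (simp add: GM_edges_def GM_vertices_def)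
    also have "\<dots> \<longleftrightarrow> l v \<le> P C \<and> P C \<le> r v"
      using assms[OF that(2)] that(1) unfolding intervals_containing_def by blast
    finally show ?thesis by (simp add: sup_dist_interval_stab_point_le_1_iff)
  qed
  fix x y assume x: "x \<in> GM_vertices V E" and y: "y \<in> GM_vertices V E" and "x \<noteq> y"
  then show "GM_edges V E x y \<longleftrightarrow> sup_dist (?f x) (?f y) \<le> 1"
  proof (cases x; cases y)
    fix v w assume "x = Inl v" "y = Inl w"
    then show ?thesis using x y \<open>x \<noteq> y\<close> by (simp add: GM_edges_def sup_dist_interval_points)
  next
    fix C D assume "x = Inr C" "y = Inr D"
    then show ?thesis using x y \<open>x \<noteq> y\<close> by (simp add: GM_edges_def sup_dist_stab_points)
  next
    fix v C assume "x = Inl v" "y = Inr C"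
    then show ?thesis using x y vertex_clique by (auto simp: GM_vertices_def)
  next
    fix C v assume "x = Inr C" "y = Inl v"
    then show ?thesis using x y vertex_clique sup_dist_commute
      by (auto simp: GM_vertices_def GM_edges_def)
  qed
qed

theorem mainTheorem11:
  fixes V :: "'a set" and E :: "'a \<Rightarrow> 'a \<Rightarrow> bool" and cG :: "'a \<Rightarrow> nat"
  assumes "interval_graph V E"
    and "V \<noteq> {}"
  shows "unit_square_graph (GM_vertices V E) (GM_edges V E)"
proof -
  obtain l r where model: "interval_model V E l r" and "finite V"
    using assms(1) unfolding interval_graph_iff_model simple_graph_def by blast
  have "\<forall>C\<in>maximal_cliques V E. \<exists>p. C = intervals_containing V l r p"
    using interval_model_maximal_clique_stabbed[OF model \<open>finite V\<close>] by metis
  then obtain P where "\<And>C. C \<in> maximal_cliques V E \<Longrightarrow> C = intervals_containing V l r (P C)"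
    by metis
  then show ?thesis by (rule unit_square_graph_GM_if_cliques_stabbed)
qed

end
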